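(* Let $a$ be a nonnegative measurable function on $\mathbb{R}_+$ with $a\in L_{\infty,loc}([0,\infty))$, and let $b$ be a nonnegative measurable function on $\mathbb{R}_+^2$ such that for a.e. $y>0$, $\int_0^y x\, b(x,y)\,\mathrm{d}x = y$ and $b(x,y)=0$ for a.e. $x>y$. Assume there are $l\ge 0$ and $b_0\ge 0$ such that $n_0(x)=\int_0^x b(y,x)\,\mathrm{d}y\le b_0(1+x^l)$ for all $x\in\mathbb{R}_+$. Let $m\ge 1$ with $m\geq l$. If $f\ge 0$ and $f\in D(A_{0,m})$, then $$\|\mathcal{B}f\|_{[0,m]}=\int_0^\infty a(y)\big(n_m(y)+n_0(y)\big)f(y)\,\mathrm{d}y<\infty,$$ where $(\mathcal{B}f)(x)=\int_x^\infty a(y)b(x,y)f(y)\,\mathrm{d}y$.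
   Context: For $m\ge0$, $n_m(y)=\int_0^y b(x,y)x^m\,\mathrm{d}x$. $X_{0,m}=L_1(\mathbb{R}_+,(1+x^m)\,\mathrm{d}x)$ with norm $\|f\|_{[0,m]}=\int_0^\infty |f(x)|(1+x^m)\,\mathrm{d}x$. $D(A_{0,m})=\{f\in X_{0,m}: af\in X_{0,m}\}$. *)

theory Defs
  imports "HOL-Analysis.Analysis"
begin

text \<open>Functions on \<open>\<real>\<^sub>+ = (0,\<infinity>)\<close> are modelled as \<open>real \<Rightarrow> real\<close>; values off \<open>(0,\<infinity>)\<close> are irrelevant.\<close>

definition norm0m :: "real \<Rightarrow> (real \<Rightarrow> real) \<Rightarrow> ennreal" where
  "norm0m m f = (\<integral>\<^sup>+ x\<in>{0<..}. ennreal (\<bar>f x\<bar> * (1 + x powr m)) \<partial>lborel)"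

definition X0m :: "real \<Rightarrow> (real \<Rightarrow> real) \<Rightarrow> bool" where
  "X0m m f \<longleftrightarrow> set_borel_measurable lborel {0<..} f \<and> norm0m m f < \<infinity>"

definition D_A0m :: "(real \<Rightarrow> real) \<Rightarrow> real \<Rightarrow> (real \<Rightarrow> real) \<Rightarrow> bool" where
  "D_A0m a m f \<longleftrightarrow> X0m m f \<and> X0m m (\<lambda>x. a x * f x)"

definition n_mom :: "(real \<Rightarrow> real \<Rightarrow> real) \<Rightarrow> real \<Rightarrow> real \<Rightarrow> ennreal" where
  "n_mom b m y = (\<integral>\<^sup>+ x\<in>{0<..<y}. ennreal (b x y * x powr m) \<partial>lborel)"

definition n_zero :: "(real \<Rightarrow> real \<Rightarrow> real) \<Rightarrow> real \<Rightarrow> ennreal" where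
  "n_zero b y = (\<integral>\<^sup>+ x\<in>{0<..<y}. ennreal (b x y) \<partial>lborel)"

definition fragB :: "(real \<Rightarrow> real) \<Rightarrow> (real \<Rightarrow> real \<Rightarrow> real) \<Rightarrow> (real \<Rightarrow> real) \<Rightarrow> real \<Rightarrow> real" where
  "fragB a b f x = (LINT y:{x<..}|lborel. a y * b x y * f y)"

definition Linf_loc :: "(real \<Rightarrow> real) \<Rightarrow> bool" where
  "Linf_loc a \<longleftrightarrow> (\<forall>T>0. \<exists>C. AE x in lborel. x \<in> {0..T} \<longrightarrow> \<bar>a x\<bar> \<le> C)"

end

theory Submission
  imports Defs
begin

text \<open>
  Write \<open>\<B>f\<close> as the integral of the kernel \<open>a(y) b(x,y) f(y)\<close> over \<open>0 < x < y\<close>. By Tonelli,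
  integrating the weight \<open>1 + x^m\<close> over the fragments \<open>x\<close> first turns \<open>\<parallel>\<B>f\<parallel>_{[0,m]}\<close> into
  \<open>\<integral> a(y) (n_m(y) + n_0(y)) f(y) dy\<close>. Since \<open>x^m \<le> x y^{m-1}\<close> for \<open>x < y\<close> and \<open>m \<ge> 1\<close>, mass
  conservation gives \<open>n_m(y) \<le> y^m\<close>, and with \<open>n_0(y) \<le> b_0 (1 + y^l)\<close>, \<open>l \<le> m\<close>, the integrand is
  at most \<open>(1 + 2 b_0)\<close> times that of \<open>\<parallel>a f\<parallel>_{[0,m]}\<close>, which is finite because \<open>f \<in> D(A_{0,m})\<close>.
\<close>

lemma set_borel_measurable_section:
  fixes g :: "real \<Rightarrow> real \<Rightarrow> real"
  assumes "set_borel_measurable lborel (A \<times> B) (\<lambda>p. g (fst p) (snd p))" and "y \<in> B"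
  shows "set_borel_measurable lborel A (\<lambda>x. g x y)"
proof -
  have "(\<lambda>p. indicator (A \<times> B) p *\<^sub>R g (fst p) (snd p)) \<in> borel_measurable (lborel \<Otimes>\<^sub>M lborel)"
    using assms(1) unfolding set_borel_measurable_def lborel_prod .
  from measurable_compose[OF measurable_Pair2'[of y] this]
  show ?thesis
    using assms(2) unfolding set_borel_measurable_def by (simp add: indicator_times)
qed

lemma nn_set_integral_eq_set_lebesgue_integral:
  fixes g :: "'a \<Rightarrow> real"
  assumes "set_borel_measurable M A g" and "\<And>x. x \<in> A \<Longrightarrow> 0 \<le> g x"
    and "(\<integral>\<^sup>+x\<in>A. ennreal (g x) \<partial>M) < \<infinity>"
  shows "(\<integral>\<^sup>+x\<in>A. ennreal (g x) \<partial>M) = ennreal (LINT x:A|M. g x)"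
proof -
  define h where "h x = indicator A x *\<^sub>R g x" for x
  have h_nn: "0 \<le> h x" for x
    using assms(2) by (simp add: h_def indicator_def)
  have nn_h: "(\<integral>\<^sup>+x. ennreal (h x) \<partial>M) = (\<integral>\<^sup>+x\<in>A. ennreal (g x) \<partial>M)"
    by (intro nn_integral_cong) (simp add: h_def indicator_def)
  have "integrable M h"
    using assms(1,3) h_nn nn_h unfolding set_borel_measurable_def h_def
    by (intro integrableI_nonneg) auto
  then have "(\<integral>\<^sup>+x. ennreal (h x) \<partial>M) = ennreal (integral\<^sup>L M h)"
    using h_nn by (intro nn_integral_eq_integral) auto
  then show ?thesis
    using nn_h unfolding set_lebesgue_integral_def h_def by simp
qed

definition fragB_kernel ::
    "(real \<Rightarrow> real) \<Rightarrow> (real \<Rightarrow> real \<Rightarrow> real) \<Rightarrow> (real \<Rightarrow> real) \<Rightarrow> real \<Rightarrow> real \<Rightarrow> real"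
  where "fragB_kernel a b f x y = (if 0 < x \<and> x < y then a y * b x y * f y else 0)"

lemma fragB_kernel_measurable:
  assumes "set_borel_measurable lborel {0<..} a" and "set_borel_measurable lborel {0<..} f"
    and "set_borel_measurable lborel ({0<..} \<times> {0<..}) (\<lambda>p. b (fst p) (snd p))"
  shows "(\<lambda>p. fragB_kernel a b f (fst p) (snd p)) \<in> borel_measurable (lborel \<Otimes>\<^sub>M lborel)"
proof -
  define a' where "a' y = indicator {0<..} y *\<^sub>R a y" for y :: real
  define f' where "f' y = indicator {0<..} y *\<^sub>R f y" for y :: real
  define b' where "b' p = indicator ({0<..} \<times> {0<..}) p *\<^sub>R b (fst p) (snd p)" for p :: "real \<times> real"
  have [measurable]: "a' \<in> borel_measurable lborel" "f' \<in> borel_measurable lborel"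
    "b' \<in> borel_measurable (lborel \<Otimes>\<^sub>M lborel)"
    using assms unfolding set_borel_measurable_def lborel_prod a'_def f'_def b'_def by auto
  have "(\<lambda>p. fragB_kernel a b f (fst p) (snd p))
      = (\<lambda>p. if 0 < fst p \<and> fst p < snd p then a' (snd p) * b' p * f' (snd p) else 0)"
    by (auto simp: fun_eq_iff fragB_kernel_def a'_def f'_def b'_def)
  also have "\<dots> \<in> borel_measurable (lborel \<Otimes>\<^sub>M lborel)"
    by measurable
  finally show ?thesis .
qed

lemma fragB_kernel_nonneg:
  assumes "\<forall>x>0. a x \<ge> 0" and "\<forall>x>0. \<forall>y>0. b x y \<ge> 0" and "\<forall>x>0. f x \<ge> 0"
  shows "fragB_kernel a b f x y \<ge> 0"
  using assms by (simp add: fragB_kernel_def)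

lemma fragB_kernel_section_measurable:
  assumes "set_borel_measurable lborel {0<..} a" and "set_borel_measurable lborel {0<..} f"
    and "set_borel_measurable lborel ({0<..} \<times> {0<..}) (\<lambda>p. b (fst p) (snd p))"
  shows "(\<lambda>y. fragB_kernel a b f x y) \<in> borel_measurable lborel"
  using measurable_compose[OF measurable_Pair1'[of x] fragB_kernel_measurable[OF assms]] by simp

lemma fragB_nonneg:
  assumes "\<forall>x>0. a x \<ge> 0" and "\<forall>x>0. \<forall>y>0. b x y \<ge> 0" and "\<forall>x>0. f x \<ge> 0" and "x > 0"
  shows "fragB a b f x \<ge> 0"
  unfolding fragB_def set_lebesgue_integral_def using assms
  by (intro Bochner_Integration.integral_nonneg) (auto simp: indicator_def)

lemma fragB_eq_nn_integral_kernel: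
  assumes a_meas: "set_borel_measurable lborel {0<..} a" and f_meas: "set_borel_measurable lborel {0<..} f"
    and b_meas: "set_borel_measurable lborel ({0<..} \<times> {0<..}) (\<lambda>p. b (fst p) (snd p))"
    and nonneg: "\<forall>x>0. a x \<ge> 0" "\<forall>x>0. \<forall>y>0. b x y \<ge> 0" "\<forall>x>0. f x \<ge> 0"
    and "x > 0" and fin: "(\<integral>\<^sup>+y. ennreal (fragB_kernel a b f x y) \<partial>lborel) < \<infinity>"
  shows "ennreal (fragB a b f x) = (\<integral>\<^sup>+y. ennreal (fragB_kernel a b f x y) \<partial>lborel)"
proof -
  have kernel_restrict: "fragB_kernel a b f x y = indicator {x<..} y *\<^sub>R (a y * b x y * f y)" for y
    using \<open>x > 0\<close> by (simp add: fragB_kernel_def indicator_def)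
  have "(\<lambda>y. fragB_kernel a b f x y) \<in> borel_measurable lborel"
    using fragB_kernel_section_measurable[OF a_meas f_meas b_meas] .
  then have meas: "set_borel_measurable lborel {x<..} (\<lambda>y. a y * b x y * f y)"
    unfolding set_borel_measurable_def kernel_restrict .
  have nn_eq: "(\<integral>\<^sup>+y. ennreal (fragB_kernel a b f x y) \<partial>lborel)
      = (\<integral>\<^sup>+y\<in>{x<..}. ennreal (a y * b x y * f y) \<partial>lborel)"
    by (intro nn_integral_cong) (simp add: kernel_restrict indicator_def)
  show ?thesis
    unfolding nn_eq fragB_def using nonneg \<open>x > 0\<close> fin
    by (intro nn_set_integral_eq_set_lebesgue_integral[symmetric, OF meas]) (auto simp: nn_eq)
qed

lemma borel_measurable_fragment_section:
  fixes b :: "real \<Rightarrow> real \<Rightarrow> real" and y :: real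
  assumes "set_borel_measurable lborel {0<..} (\<lambda>x. b x y)" and "g \<in> borel_measurable borel"
  shows "(\<lambda>x. ennreal (g x * b x y) * indicator {0<..<y} x) \<in> borel_measurable lborel"
proof -
  define b' where "b' x = indicator {0<..} x *\<^sub>R b x y" for x
  have [measurable]: "b' \<in> borel_measurable borel" "g \<in> borel_measurable borel"
    using assms unfolding set_borel_measurable_def b'_def by auto
  have "(\<lambda>x. ennreal (g x * b x y) * indicator {0<..<y} x)
      = (\<lambda>x. ennreal (g x * b' x) * indicator {..<y} x)"
    by (auto simp: fun_eq_iff indicator_def b'_def)
  also have "\<dots> \<in> borel_measurable lborel"
    by measurable
  finally show ?thesis .
qed

lemma nn_integral_weighted_fragment:
  assumes b_meas: "set_borel_measurable lborel {0<..} (\<lambda>x. b x y)"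
    and b_nonneg: "\<forall>x>0. b x y \<ge> 0"
  shows "(\<integral>\<^sup>+x\<in>{0<..<y}. ennreal (b x y * (1 + x powr m)) \<partial>lborel) = n_mom b m y + n_zero b y"
proof -
  have split: "ennreal (b x y * (1 + x powr m)) * indicator {0<..<y} x
      = ennreal (x powr m * b x y) * indicator {0<..<y} x + ennreal (1 * b x y) * indicator {0<..<y} x" for x
    using b_nonneg by (auto simp: indicator_def algebra_simps ennreal_plus[symmetric] simp del: ennreal_plus)
  have "n_mom b m y = (\<integral>\<^sup>+x. ennreal (x powr m * b x y) * indicator {0<..<y} x \<partial>lborel)"
    by (simp add: n_mom_def mult.commute)
  moreover have "n_zero b y = (\<integral>\<^sup>+x. ennreal (1 * b x y) * indicator {0<..<y} x \<partial>lborel)"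
    by (simp add: n_zero_def)
  ultimately show ?thesis
    unfolding split
    using borel_measurable_fragment_section[where b=b and y=y and g="\<lambda>x. x powr m", OF b_meas]
      borel_measurable_fragment_section[where b=b and y=y and g="\<lambda>_. 1", OF b_meas]
    by (subst nn_integral_add) auto
qed

lemma nn_integral_weighted_fragB_kernel:
  assumes b_meas: "set_borel_measurable lborel ({0<..} \<times> {0<..}) (\<lambda>p. b (fst p) (snd p))"
    and nonneg: "\<forall>x>0. a x \<ge> 0" "\<forall>x>0. \<forall>y>0. b x y \<ge> 0" "\<forall>x>0. f x \<ge> 0"
  shows "(\<integral>\<^sup>+x. ennreal (fragB_kernel a b f x y * (1 + x powr m)) \<partial>lborel)
    = ennreal (a y) * (n_mom b m y + n_zero b y) * ennreal (f y) * indicator {0<..} y"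
proof (cases "y > 0")
  case False
  then have "fragB_kernel a b f x y = 0" for x
    by (simp add: fragB_kernel_def)
  then show ?thesis
    using False by simp
next
  case True
  have b_sec: "set_borel_measurable lborel {0<..} (\<lambda>x. b x y)"
    using set_borel_measurable_section[OF b_meas] True by simp
  have factor: "ennreal (fragB_kernel a b f x y * (1 + x powr m))
      = ennreal (a y * f y) * (ennreal (b x y * (1 + x powr m)) * indicator {0<..<y} x)" for x
    using nonneg True
    by (auto simp: fragB_kernel_def indicator_def ennreal_mult'[symmetric] mult_ac)
  have "(\<lambda>x. ennreal (b x y * (1 + x powr m)) * indicator {0<..<y} x) \<in> borel_measurable lborel"
    using borel_measurable_fragment_section[where b=b and y=y and g="\<lambda>x. 1 + x powr m", OF b_sec] by (simp add: mult.commute)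
  moreover have "(\<integral>\<^sup>+x\<in>{0<..<y}. ennreal (b x y * (1 + x powr m)) \<partial>lborel) = n_mom b m y + n_zero b y"
    using nonneg(2) True by (intro nn_integral_weighted_fragment b_sec) auto
  ultimately have "(\<integral>\<^sup>+x. ennreal (fragB_kernel a b f x y * (1 + x powr m)) \<partial>lborel)
      = ennreal (a y * f y) * (n_mom b m y + n_zero b y)"
    unfolding factor by (simp add: nn_integral_cmult)
  then show ?thesis
    using True nonneg by (simp add: ennreal_mult mult_ac)
qed

lemma norm0m_fragB:
  assumes a_meas: "set_borel_measurable lborel {0<..} a" and f_meas: "set_borel_measurable lborel {0<..} f"
    and b_meas: "set_borel_measurable lborel ({0<..} \<times> {0<..}) (\<lambda>p. b (fst p) (snd p))"
    and nonneg: "\<forall>x>0. a x \<ge> 0" "\<forall>x>0. \<forall>y>0. b x y \<ge> 0" "\<forall>x>0. f x \<ge> 0"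
    and fin: "(\<integral>\<^sup>+y\<in>{0<..}. ennreal (a y) * (n_mom b m y + n_zero b y) * ennreal (f y) \<partial>lborel) < \<infinity>"
  shows "norm0m m (fragB a b f)
    = (\<integral>\<^sup>+y\<in>{0<..}. ennreal (a y) * (n_mom b m y + n_zero b y) * ennreal (f y) \<partial>lborel)"
    (is "_ = ?R")
proof -
  define W where "W x y = ennreal (fragB_kernel a b f x y * (1 + x powr m))" for x y
  have [measurable]: "(\<lambda>p. fragB_kernel a b f (fst p) (snd p)) \<in> borel_measurable (lborel \<Otimes>\<^sub>M lborel)"
    using fragB_kernel_measurable[OF a_meas f_meas b_meas] .
  have W_meas: "(\<lambda>p. W (fst p) (snd p)) \<in> borel_measurable (lborel \<Otimes>\<^sub>M lborel)"
    unfolding W_def by measurable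
  have "(\<integral>\<^sup>+x. (\<integral>\<^sup>+y. W x y \<partial>lborel) \<partial>lborel) = (\<integral>\<^sup>+y. (\<integral>\<^sup>+x. W x y \<partial>lborel) \<partial>lborel)"
    using W_meas by (intro lborel_pair.Fubini'[symmetric]) (simp add: case_prod_beta)
  also have "\<dots> = ?R"
    unfolding W_def nn_integral_weighted_fragB_kernel[OF b_meas nonneg] by (simp add: mult_ac)
  finally have tonelli: "(\<integral>\<^sup>+x. (\<integral>\<^sup>+y. W x y \<partial>lborel) \<partial>lborel) = ?R" .
  txt \<open>\<open>fragB\<close> is a Bochner integral, hence junk where the kernel is not integrable; this
    happens only on a null set of fragment sizes \<open>x\<close>.\<close>
  have "AE x in lborel. (\<integral>\<^sup>+y. W x y \<partial>lborel) \<noteq> \<infinity>"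
    using W_meas fin unfolding tonelli[symmetric]
    by (intro nn_integral_PInf_AE lborel.borel_measurable_nn_integral) (simp_all add: case_prod_beta)
  then have "AE x in lborel.
      ennreal (\<bar>fragB a b f x\<bar> * (1 + x powr m)) * indicator {0<..} x = (\<integral>\<^sup>+y. W x y \<partial>lborel)"
  proof eventually_elim
    case (elim x)
    show ?case
    proof (cases "x > 0")
      case False
      then show ?thesis by (simp add: W_def fragB_kernel_def)
    next
      case True
      have w_pos: "1 + x powr m > 0"
        by (simp add: add_pos_nonneg)
      have "(\<lambda>y. fragB_kernel a b f x y) \<in> borel_measurable lborel"
        using fragB_kernel_section_measurable[OF a_meas f_meas b_meas] .
      then have W_factor: "(\<integral>\<^sup>+y. W x y \<partial>lborel)
          = (\<integral>\<^sup>+y. ennreal (fragB_kernel a b f x y) \<partial>lborel) * ennreal (1 + x powr m)"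
        using fragB_kernel_nonneg[OF nonneg] w_pos
        by (simp add: W_def ennreal_mult nn_integral_multc)
      then have "(\<integral>\<^sup>+y. ennreal (fragB_kernel a b f x y) \<partial>lborel) < \<infinity>"
        using elim w_pos by (auto simp: ennreal_mult_eq_top_iff top.not_eq_extremum)
      then have "ennreal (fragB a b f x) = (\<integral>\<^sup>+y. ennreal (fragB_kernel a b f x y) \<partial>lborel)"
        using True by (intro fragB_eq_nn_integral_kernel[OF a_meas f_meas b_meas nonneg])
      then show ?thesis
        using True w_pos fragB_nonneg[OF nonneg True] by (simp add: W_factor ennreal_mult)
    qed
  qed
  then have "norm0m m (fragB a b f) = (\<integral>\<^sup>+x. (\<integral>\<^sup>+y. W x y \<partial>lborel) \<partial>lborel)"
    unfolding norm0m_def by (rule nn_integral_cong_AE)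
  then show ?thesis
    using tonelli by simp
qed

lemma n_mom_le_powr:
  fixes b :: "real \<Rightarrow> real \<Rightarrow> real"
  assumes b_meas: "set_borel_measurable lborel {0<..} (\<lambda>x. b x y)"
    and b_nonneg: "\<forall>x>0. b x y \<ge> 0"
    and mass: "(\<integral>\<^sup>+x\<in>{0<..<y}. ennreal (x * b x y) \<partial>lborel) = ennreal y"
    and "m \<ge> 1" and "y > 0"
  shows "n_mom b m y \<le> ennreal (y powr m)"
proof -
  have pointwise: "ennreal (b x y * x powr m) * indicator {0<..<y} x
      \<le> ennreal (y powr (m - 1)) * (ennreal (x * b x y) * indicator {0<..<y} x)" for x
  proof (cases "0 < x \<and> x < y")
    case True
    have "x powr m = x * x powr (m - 1)"
      using True by (simp add: powr_mult_base)
    also have "\<dots> \<le> x * y powr (m - 1)"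
      using True \<open>m \<ge> 1\<close> by (intro mult_left_mono powr_mono2) auto
    finally have "x powr m * b x y \<le> x * y powr (m - 1) * b x y"
      using True b_nonneg by (intro mult_right_mono) auto
    then have "b x y * x powr m \<le> y powr (m - 1) * (x * b x y)"
      by (simp add: mult_ac)
    then show ?thesis
      using True b_nonneg by (simp add: ennreal_mult'[symmetric] ennreal_leI)
  qed auto
  have "n_mom b m y \<le> (\<integral>\<^sup>+x. ennreal (y powr (m - 1)) * (ennreal (x * b x y) * indicator {0<..<y} x) \<partial>lborel)"
    unfolding n_mom_def by (intro nn_integral_mono pointwise)
  also have "\<dots> = ennreal (y powr (m - 1)) * ennreal y"
    using borel_measurable_fragment_section[where b=b and y=y and g="\<lambda>x. x", OF b_meas] mass
    by (simp add: nn_integral_cmult)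
  also have "\<dots> = ennreal (y powr m)"
    using \<open>y > 0\<close> powr_mult_base[of y "m - 1"] by (simp add: ennreal_mult'[symmetric] mult.commute)
  finally show ?thesis .
qed

lemma powr_le_one_plus_powr:
  fixes y l m :: real
  assumes "0 \<le> l" and "l \<le> m" and "y > 0"
  shows "y powr l \<le> 1 + y powr m"
proof (cases "y \<le> 1")
  case True
  then have "y powr l \<le> 1"
    using assms by (simp add: powr_le1)
  then show ?thesis
    by (simp add: add_increasing2)
next
  case False
  then have "y powr l \<le> y powr m"
    using assms by (intro powr_mono) auto
  then show ?thesis
    by simp
qed

lemma fragment_moments_le:
  fixes y l m b0 :: real
  assumes "n_mom b m y \<le> ennreal (y powr m)" and "n_zero b y \<le> ennreal (b0 * (1 + y powr l))"
    and "0 \<le> l" and "l \<le> m" and "0 \<le> b0" and "y > 0"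
  shows "n_mom b m y + n_zero b y \<le> ennreal ((1 + 2 * b0) * (1 + y powr m))"
proof -
  have "b0 * (1 + y powr l) \<le> b0 * (2 + y powr m)"
    using powr_le_one_plus_powr[OF assms(3,4,6)] \<open>0 \<le> b0\<close> by (intro mult_left_mono) auto
  also have "\<dots> \<le> 2 * b0 * (1 + y powr m)"
    using \<open>0 \<le> b0\<close> by (simp add: algebra_simps)
  finally have "y powr m + b0 * (1 + y powr l) \<le> (1 + 2 * b0) * (1 + y powr m)"
    by (simp add: algebra_simps)
  then have "ennreal (y powr m) + ennreal (b0 * (1 + y powr l)) \<le> ennreal ((1 + 2 * b0) * (1 + y powr m))"
    using \<open>0 \<le> b0\<close> by (simp add: ennreal_plus[symmetric] ennreal_leI del: ennreal_plus)
  then show ?thesis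
    using add_mono[OF assms(1,2)] by (rule order_trans[rotated])
qed

lemma nn_integral_le_norm0m:
  fixes a f n :: "real \<Rightarrow> _"
  assumes a_meas: "set_borel_measurable lborel {0<..} a" and f_meas: "set_borel_measurable lborel {0<..} f"
    and a_nonneg: "\<forall>x>0. a x \<ge> 0" and f_nonneg: "\<forall>x>0. f x \<ge> 0"
    and n_le: "AE y in lborel. y > 0 \<longrightarrow> n y \<le> ennreal (C * (1 + y powr m))" and "C \<ge> 0"
  shows "(\<integral>\<^sup>+y\<in>{0<..}. ennreal (a y) * n y * ennreal (f y) \<partial>lborel)
    \<le> ennreal C * norm0m m (\<lambda>x. a x * f x)"
proof -
  define a' where "a' y = indicator {0<..} y *\<^sub>R a y" for y :: real
  define f' where "f' y = indicator {0<..} y *\<^sub>R f y" for y :: real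
  have [measurable]: "a' \<in> borel_measurable lborel" "f' \<in> borel_measurable lborel"
    using a_meas f_meas unfolding set_borel_measurable_def a'_def f'_def by auto
  have "(\<lambda>y. ennreal (\<bar>a y * f y\<bar> * (1 + y powr m)) * indicator {0<..} y)
      = (\<lambda>y. ennreal (\<bar>a' y * f' y\<bar> * (1 + y powr m)))"
    by (auto simp: fun_eq_iff a'_def f'_def indicator_def)
  then have weight_meas: "(\<lambda>y. ennreal (\<bar>a y * f y\<bar> * (1 + y powr m)) * indicator {0<..} y)
      \<in> borel_measurable lborel"
    by simp
  have "(\<integral>\<^sup>+y\<in>{0<..}. ennreal (a y) * n y * ennreal (f y) \<partial>lborel)
      \<le> (\<integral>\<^sup>+y. ennreal C * (ennreal (\<bar>a y * f y\<bar> * (1 + y powr m)) * indicator {0<..} y) \<partial>lborel)"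
    using n_le
  proof (intro nn_integral_mono_AE, eventually_elim)
    case (elim y)
    show ?case
    proof (cases "y > 0")
      case True
      then have "0 \<le> a y" "0 \<le> f y"
        using a_nonneg f_nonneg by auto
      then have "ennreal (a y) * n y * ennreal (f y) \<le> ennreal (a y) * ennreal (C * (1 + y powr m)) * ennreal (f y)"
        using elim True by (intro mult_right_mono mult_left_mono) auto
      then show ?thesis
        using True \<open>0 \<le> a y\<close> \<open>0 \<le> f y\<close> \<open>C \<ge> 0\<close>
        by (simp add: ennreal_mult'[symmetric] ennreal_mult[symmetric] mult_ac)
    qed simp
  qed
  also have "\<dots> = ennreal C * norm0m m (\<lambda>x. a x * f x)"
    unfolding norm0m_def using weight_meas by (simp add: nn_integral_cmult)
  finally show ?thesis .
qed

theorem lemma2p1: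
  fixes a :: "real \<Rightarrow> real" and b :: "real \<Rightarrow> real \<Rightarrow> real" and f :: "real \<Rightarrow> real"
    and l b0 m :: real
  assumes a_meas: "set_borel_measurable lborel {0<..} a"
    and a_nonneg: "\<forall>x>0. a x \<ge> 0"
    and a_loc: "Linf_loc a"
    and b_meas: "set_borel_measurable lborel ({0<..} \<times> {0<..}) (\<lambda>p. b (fst p) (snd p))"
    and b_nonneg: "\<forall>x>0. \<forall>y>0. b x y \<ge> 0"
    and b_mass: "AE y in lborel. y > 0 \<longrightarrow>
                   (\<integral>\<^sup>+ x\<in>{0<..<y}. ennreal (x * b x y) \<partial>lborel) = ennreal y"
    and b_supp: "AE y in lborel. y > 0 \<longrightarrow> (AE x in lborel. x > y \<longrightarrow> b x y = 0)"
    and l_nonneg: "l \<ge> 0" and b0_nonneg: "b0 \<ge> 0"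
    and n0_bound: "\<forall>x>0. n_zero b x \<le> ennreal (b0 * (1 + x powr l))"
    and m_ge1: "m \<ge> 1" and m_ge_l: "m \<ge> l"
    and f_nonneg: "\<forall>x>0. f x \<ge> 0"
    and f_dom: "D_A0m a m f"
  shows "norm0m m (fragB a b f) =
           (\<integral>\<^sup>+ y\<in>{0<..}. ennreal (a y) * (n_mom b m y + n_zero b y) * ennreal (f y) \<partial>lborel)
         \<and> norm0m m (fragB a b f) < \<infinity>"
proof -
  have f_meas: "set_borel_measurable lborel {0<..} f"
    and af_fin: "norm0m m (\<lambda>x. a x * f x) < \<infinity>"
    using f_dom unfolding D_A0m_def X0m_def by auto
  have moments: "AE y in lborel. y > 0 \<longrightarrow>
      n_mom b m y + n_zero b y \<le> ennreal ((1 + 2 * b0) * (1 + y powr m))"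
    using b_mass
  proof eventually_elim
    case (elim y)
    show ?case
    proof
      assume "y > 0"
      then have b_sec: "set_borel_measurable lborel {0<..} (\<lambda>x. b x y)"
        using set_borel_measurable_section[OF b_meas] by simp
      have "n_mom b m y \<le> ennreal (y powr m)"
        using elim \<open>y > 0\<close> b_nonneg m_ge1 by (intro n_mom_le_powr b_sec) auto
      then show "n_mom b m y + n_zero b y \<le> ennreal ((1 + 2 * b0) * (1 + y powr m))"
        using n0_bound \<open>y > 0\<close> l_nonneg m_ge_l b0_nonneg by (intro fragment_moments_le) auto
    qed
  qed
  have "(\<integral>\<^sup>+y\<in>{0<..}. ennreal (a y) * (n_mom b m y + n_zero b y) * ennreal (f y) \<partial>lborel)
      \<le> ennreal (1 + 2 * b0) * norm0m m (\<lambda>x. a x * f x)" (is "?rhs \<le> _")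
    using a_meas f_meas a_nonneg f_nonneg moments b0_nonneg by (intro nn_integral_le_norm0m) auto
  also have "\<dots> < \<infinity>"
    using af_fin by (simp add: ennreal_mult_less_top)
  finally have fin: "?rhs < \<infinity>" .
  show ?thesis
    using norm0m_fragB[OF a_meas f_meas b_meas a_nonneg b_nonneg f_nonneg fin] fin by simp
qed

end
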